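(* Let $n\ge 2$ and let $\pi\colon \Omega_n\to\mathbb{G}_n$ be the map sending a matrix in the spectral ball $\Omega_n=\{A\in\mathbb{C}^{n\times n}:\rho(A)<1\}$ to the vector $(\sigma_1,\dots,\sigma_n)$ of elementary symmetric polynomials of its eigenvalues. Then every fibre $\pi^{-1}(x)$, $x\in\mathbb{G}_n$, is $\mathbb{C}$-connected; the largest stratum of every fibre is $\mathbb{C}$-connected; and every connected component of every stratum of every fibre is $\mathbb{C}$-connected.
   Context: $\mathbb{G}_n=(\sigma_1,\dots,\sigma_n)(\mathbb{D}^n)$ is the symmetrized polydisc, $\rho$ the spectral radius. A fibre $\pi^{-1}(x)$ is the set of matrices in $\Omega_n$ with a prescribed characteristic polynomial; it decomposes into strata, which are the similarity classes (orbits of $\mathrm{SL}_n(\mathbb{C})$ acting by conjugation) contained in it; the largest stratum is the similarity class of cyclic matrices (one Jordan block per eigenvalue) in the fibre. A set $S$ is $\mathbb{C}$-connected if any two points of $S$ can be joined by a finite chain of images of holomorphic maps $\mathbb{C}\to S$, consecutive images intersecting. *)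

theory Defs
  imports "HOL-Analysis.Analysis" "Jordan_Normal_Form.Jordan_Normal_Form" "Jordan_Normal_Form.Spectral_Radius"
begin

definition spectral_ball :: "nat \<Rightarrow> complex mat set" where
  "spectral_ball n = {A \<in> carrier_mat n n. spectral_radius A < 1}"

text \<open>\<pi>(A) = (\<sigma>_1,...,\<sigma>_n) of the eigenvalues (with multiplicity);
  \<sigma>_k = (-1)^k times the coefficient of X^(n-k) in the monic characteristic polynomial.\<close>
definition sym_map :: "nat \<Rightarrow> complex mat \<Rightarrow> complex list" where
  "sym_map n A = map (\<lambda>k. (-1) ^ k * coeff (char_poly A) (n - k)) [1..<n+1]"

definition symmetrized_polydisc :: "nat \<Rightarrow> complex list set" where
  "symmetrized_polydisc n = sym_map n ` spectral_ball n"

definition fibre :: "nat \<Rightarrow> complex list \<Rightarrow> complex mat set" where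
  "fibre n x = {A \<in> spectral_ball n. sym_map n A = x}"

definition strata :: "nat \<Rightarrow> complex list \<Rightarrow> complex mat set set" where
  "strata n x = {S. \<exists>A \<in> fibre n x. S = {B \<in> carrier_mat n n. similar_mat B A}}"

text \<open>Cyclic matrix: exactly one Jordan block per eigenvalue.\<close>
definition cyclic_mat :: "complex mat \<Rightarrow> bool" where
  "cyclic_mat A = (\<exists>n_as. jordan_nf A n_as \<and> distinct (map snd n_as))"

definition largest_stratum :: "nat \<Rightarrow> complex list \<Rightarrow> complex mat set" where
  "largest_stratum n x = {A \<in> fibre n x. cyclic_mat A}"

definition entry_fun :: "nat \<Rightarrow> complex mat \<Rightarrow> (nat \<times> nat \<Rightarrow> complex)" where
  "entry_fun n A = (\<lambda>(i, j). if i < n \<and> j < n then A $$ (i, j) else 0)"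

definition mat_top :: "nat \<Rightarrow> complex mat topology" where
  "mat_top n = pullback_topology (carrier_mat n n) (entry_fun n) euclidean"

definition holo_mat_map :: "nat \<Rightarrow> (complex \<Rightarrow> complex mat) \<Rightarrow> bool" where
  "holo_mat_map n f = ((\<forall>z. f z \<in> carrier_mat n n) \<and>
     (\<forall>i<n. \<forall>j<n. (\<lambda>z. f z $$ (i, j)) holomorphic_on UNIV))"

definition C_connected :: "nat \<Rightarrow> complex mat set \<Rightarrow> bool" where
  "C_connected n S = (\<forall>a\<in>S. \<forall>b\<in>S. \<exists>fs :: (complex \<Rightarrow> complex mat) list.
      fs \<noteq> [] \<and> (\<forall>f\<in>set fs. holo_mat_map n f \<and> range f \<subseteq> S) \<and>
      a \<in> range (hd fs) \<and> b \<in> range (last fs) \<and>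
      (\<forall>i. Suc i < length fs \<longrightarrow> range (fs ! i) \<inter> range (fs ! Suc i) \<noteq> {}))"

end

theory Submission
  imports Defs
begin

text \<open>
  A fibre of the spectral map consists of the matrices of size \<open>n\<close> with a fixed characteristic
  polynomial, and its strata are similarity classes. Every invertible matrix is joined to the
  identity by an entire family of invertible matrices (triangularize, then deform the triangular
  factor), so conjugating by such a family gives one entire curve through any two points of a
  similarity class. Each matrix of a fibre is conjugate to an upper triangular matrix, which the
  curve \<open>z \<mapsto> diagonal + (1 - z) strict upper part\<close> joins, inside the fibre, to the diagonal
  matrix of its eigenvalues; so the fibre is \<open>\<complex>\<close>-connected. Cyclic matrices with the same
  characteristic polynomial have the same Jordan blocks and are therefore similar, so the largest
  stratum is a single similarity class. Finally a \<open>\<complex>\<close>-connected set is connected, hence it is its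
  own unique connected component.
\<close>

section \<open>Entire matrix-valued maps\<close>

lemma holo_mat_map_const: "A \<in> carrier_mat n n \<Longrightarrow> holo_mat_map n (\<lambda>_. A)"
  unfolding holo_mat_map_def by auto

lemma holo_mat_map_mult:
  assumes F: "holo_mat_map n F" and G: "holo_mat_map n G"
  shows "holo_mat_map n (\<lambda>z. F z * G z)"
proof -
  have cF: "\<And>z. F z \<in> carrier_mat n n" and cG: "\<And>z. G z \<in> carrier_mat n n"
    using F G by (auto simp: holo_mat_map_def)
  have entry: "(F z * G z) $$ (i, j) = (\<Sum>k = 0..<n. F z $$ (i, k) * G z $$ (k, j))"
    if "i < n" "j < n" for z i j
    using cF[of z] cG[of z] that by (auto simp: scalar_prod_def)
  show ?thesis
    using F G mult_carrier_mat[OF cF cG]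
    by (auto simp: entry holo_mat_map_def intro!: holomorphic_intros)
qed

lemma holo_mat_map_smult:
  assumes f: "f holomorphic_on UNIV" and F: "holo_mat_map n F"
  shows "holo_mat_map n (\<lambda>z. f z \<cdot>\<^sub>m F z)"
proof -
  have cF: "\<And>z. F z \<in> carrier_mat n n" using F by (simp add: holo_mat_map_def)
  have "(f z \<cdot>\<^sub>m F z) $$ (i, j) = f z * F z $$ (i, j)" if "i < n" "j < n" for z i j
    using cF[of z] that by simp
  then show ?thesis
    using f F by (auto simp: holo_mat_map_def cF intro!: holomorphic_intros)
qed

lemma holomorphic_on_det:
  assumes F: "holo_mat_map n F"
  shows "(\<lambda>z. det (F z)) holomorphic_on UNIV"
proof -
  have "det (F z) = (\<Sum>p | p permutes {0..<n}. signof p * (\<Prod>i = 0..<n. F z $$ (i, p i)))" for z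
    using F by (intro det_def') (simp add: holo_mat_map_def)
  moreover have "(\<lambda>z. \<Sum>p | p permutes {0..<n}. signof p * (\<Prod>i = 0..<n. F z $$ (i, p i)))
      holomorphic_on UNIV"
    using F by (auto simp: holo_mat_map_def permutes_in_image intro!: holomorphic_intros)
  ultimately show ?thesis by simp
qed

lemma holo_mat_map_adj_mat:
  assumes F: "holo_mat_map n F"
  shows "holo_mat_map n (\<lambda>z. adj_mat (F z))"
proof -
  have cF: "\<And>z. F z \<in> carrier_mat n n" using F by (simp add: holo_mat_map_def)
  have minor: "holo_mat_map (n - 1) (\<lambda>z. mat_delete (F z) i j)" for i j
  proof -
    have "mat_delete (F z) i j $$ (i', j') =
        F z $$ (if i' < i then i' else Suc i', if j' < j then j' else Suc j')"
      if "i' < n - 1" "j' < n - 1" for z i' j'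
      using cF[of z] that by (simp add: mat_delete_def)
    then show ?thesis
      using F mat_delete_carrier[OF cF] by (auto simp: holo_mat_map_def)
  qed
  have "adj_mat (F z) $$ (i, j) = (-1) ^ (j + i) * det (mat_delete (F z) j i)"
    if "i < n" "j < n" for z i j
    using cF[of z] that by (simp add: adj_mat_def cofactor_def)
  then show ?thesis
    using holomorphic_on_det[OF minor] adj_mat(1)[OF cF]
    by (auto simp: holo_mat_map_def intro!: holomorphic_intros)
qed

lemma holo_mat_map_right_inverse:
  assumes F: "holo_mat_map n F" and det: "\<And>z. det (F z) \<noteq> 0"
  obtains G where "holo_mat_map n G" "\<And>z. F z * G z = 1\<^sub>m n"
proof
  have cF: "\<And>z. F z \<in> carrier_mat n n" using F by (simp add: holo_mat_map_def)
  show "holo_mat_map n (\<lambda>z. inverse (det (F z)) \<cdot>\<^sub>m adj_mat (F z))"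
    using holomorphic_on_det[OF F] det
    by (intro holo_mat_map_smult holo_mat_map_adj_mat F holomorphic_on_inverse)
  show "F z * (inverse (det (F z)) \<cdot>\<^sub>m adj_mat (F z)) = 1\<^sub>m n" for z
  proof -
    have "F z * (inverse (det (F z)) \<cdot>\<^sub>m adj_mat (F z))
        = inverse (det (F z)) \<cdot>\<^sub>m (det (F z) \<cdot>\<^sub>m 1\<^sub>m n)"
      using mult_smult_distrib[OF cF adj_mat(1)[OF cF]] adj_mat(2)[OF cF] by simp
    also have "\<dots> = 1\<^sub>m n"
      using det[of z] by (intro eq_matI) auto
    finally show ?thesis .
  qed
qed

lemma upper_triangular_holo_path:
  fixes T :: "complex mat"
  assumes T: "T \<in> carrier_mat n n" and ut: "upper_triangular T"
    and diag: "\<And>i. i < n \<Longrightarrow> T $$ (i, i) \<noteq> 0"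
  obtains D where "holo_mat_map n D" "\<And>z. det (D z) \<noteq> 0" "D 0 = 1\<^sub>m n" "D 1 = T"
proof
  define D where "D z = mat n n (\<lambda>(i, j).
    if i = j then exp (z * Ln (T $$ (i, i))) else z * T $$ (i, j))" for z
  have D: "D z \<in> carrier_mat n n" for z by (simp add: D_def)
  have "(\<lambda>z. D z $$ (i, j)) holomorphic_on UNIV" if "i < n" "j < n" for i j
    using that by (cases "i = j") (auto simp: D_def intro!: holomorphic_intros)
  then show "holo_mat_map n D" using D by (simp add: holo_mat_map_def)
  have utD: "upper_triangular (D z)" for z
    using ut T by (auto simp: upper_triangular_def D_def)
  show "det (D z) \<noteq> 0" for z
    unfolding det_upper_triangular[OF utD D] by (auto simp: prod_list_zero_iff diag_mat_def D_def)
  show "D 0 = 1\<^sub>m n" by (rule eq_matI) (auto simp: D_def)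
  show "D 1 = T" by (rule eq_matI) (use T diag in \<open>auto simp: D_def\<close>)
qed

lemma invertible_mat_holo_path:
  fixes P :: "complex mat"
  assumes P: "P \<in> carrier_mat n n" and detP: "det P \<noteq> 0"
  obtains F where "holo_mat_map n F" "\<And>z. det (F z) \<noteq> 0" "F 0 = 1\<^sub>m n" "F 1 = P"
proof -
  obtain es where es: "char_poly P = (\<Prod>e \<leftarrow> es. [:- e, 1:])"
    using char_poly_factorized[OF P] by blast
  obtain T U V where sd: "schur_decomposition P es = (T, U, V)"
    by (cases "schur_decomposition P es") auto
  from schur_decomposition[OF P es sd] have wit: "similar_mat_wit P T U V"
    and ut: "upper_triangular T" by auto
  from similar_mat_witD2[OF P wit] have T: "T \<in> carrier_mat n n" and U: "U \<in> carrier_mat n n"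
    and V: "V \<in> carrier_mat n n" and UV: "U * V = 1\<^sub>m n" and P_eq: "P = U * T * V" by auto
  have detUV: "det U * det V = 1"
    using det_mult[OF U V] UV by simp
  have "det P = det U * det T * det V"
    unfolding P_eq using det_mult U T V by (metis mult_carrier_mat)
  then have "prod_list (diag_mat T) \<noteq> 0"
    using detP det_upper_triangular[OF ut T] by auto
  then have "T $$ (i, i) \<noteq> 0" if "i < n" for i
    using that T by (auto simp: diag_mat_def prod_list_zero_iff)
  then obtain D where D: "holo_mat_map n D" and detD: "\<And>z. det (D z) \<noteq> 0"
    and D0: "D 0 = 1\<^sub>m n" and D1: "D 1 = T"
    using upper_triangular_holo_path[OF T ut] by blast
  have cD: "D z \<in> carrier_mat n n" for z using D by (simp add: holo_mat_map_def)
  show ?thesis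
  proof
    show "holo_mat_map n (\<lambda>z. U * D z * V)"
      by (intro holo_mat_map_mult holo_mat_map_const D U V)
    show "det (U * D z * V) \<noteq> 0" for z
      using det_mult[OF mult_carrier_mat[OF U cD] V] det_mult[OF U cD] detUV detD[of z]
      by (metis mult_eq_0_iff zero_neq_one)
    show "U * D 0 * V = 1\<^sub>m n" using U UV by (simp add: D0)
    show "U * D 1 * V = P" using P_eq by (simp add: D1)
  qed
qed

section \<open>Chains of entire curves\<close>

definition holo_chain :: "nat \<Rightarrow> complex mat set \<Rightarrow> complex mat \<Rightarrow> complex mat \<Rightarrow> bool" where
  "holo_chain n S a b = (\<exists>fs :: (complex \<Rightarrow> complex mat) list.
      fs \<noteq> [] \<and> (\<forall>f\<in>set fs. holo_mat_map n f \<and> range f \<subseteq> S) \<and>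
      a \<in> range (hd fs) \<and> b \<in> range (last fs) \<and>
      (\<forall>i. Suc i < length fs \<longrightarrow> range (fs ! i) \<inter> range (fs ! Suc i) \<noteq> {}))"

lemma C_connected_iff_holo_chain: "C_connected n S \<longleftrightarrow> (\<forall>a\<in>S. \<forall>b\<in>S. holo_chain n S a b)"
  unfolding C_connected_def holo_chain_def by simp

lemma holo_chain_curve:
  assumes "holo_mat_map n f" "range f \<subseteq> S"
  shows "holo_chain n S (f s) (f t)"
  unfolding holo_chain_def using assms by (intro exI[of _ "[f]"]) auto

lemma holo_chain_trans:
  assumes "holo_chain n S a b" "holo_chain n S b c"
  shows "holo_chain n S a c"
proof -
  obtain fs where fs: "fs \<noteq> []" "\<forall>f\<in>set fs. holo_mat_map n f \<and> range f \<subseteq> S"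
    "a \<in> range (hd fs)" "b \<in> range (last fs)"
    "\<forall>i. Suc i < length fs \<longrightarrow> range (fs ! i) \<inter> range (fs ! Suc i) \<noteq> {}"
    using assms(1) unfolding holo_chain_def by blast
  obtain gs where gs: "gs \<noteq> []" "\<forall>f\<in>set gs. holo_mat_map n f \<and> range f \<subseteq> S"
    "b \<in> range (hd gs)" "c \<in> range (last gs)"
    "\<forall>i. Suc i < length gs \<longrightarrow> range (gs ! i) \<inter> range (gs ! Suc i) \<noteq> {}"
    using assms(2) unfolding holo_chain_def by blast
  have links: "range ((fs @ gs) ! i) \<inter> range ((fs @ gs) ! Suc i) \<noteq> {}"
    if i: "Suc i < length (fs @ gs)" for i
  proof -
    consider "Suc i < length fs" | "Suc i = length fs" | "Suc i > length fs" by linarith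
    then show ?thesis
    proof cases
      case 1
      then show ?thesis using fs(5) by (simp add: nth_append)
    next
      case 2
      then have "i = length fs - 1" by simp
      with 2 have "(fs @ gs) ! i = last fs" "(fs @ gs) ! Suc i = hd gs"
        using fs(1) gs(1) by (auto simp: nth_append last_conv_nth hd_conv_nth)
      then show ?thesis using fs(4) gs(3) by auto
    next
      case 3
      define j where "j = i - length fs"
      with 3 have j: "i = length fs + j" by simp
      then have "Suc j < length gs" using i by simp
      then show ?thesis using gs(5) j by (simp add: nth_append)
    qed
  qed
  have "\<forall>f\<in>set (fs @ gs). holo_mat_map n f \<and> range f \<subseteq> S"
    using fs(2) gs(2) by auto
  then show ?thesis
    unfolding holo_chain_def using fs(1,3) gs(1,4) links
    by (intro exI[of _ "fs @ gs"]) auto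
qed

lemma holo_chain_sym:
  assumes "holo_chain n S a b"
  shows "holo_chain n S b a"
proof -
  obtain fs where fs: "fs \<noteq> []" "\<forall>f\<in>set fs. holo_mat_map n f \<and> range f \<subseteq> S"
    "a \<in> range (hd fs)" "b \<in> range (last fs)"
    "\<forall>i. Suc i < length fs \<longrightarrow> range (fs ! i) \<inter> range (fs ! Suc i) \<noteq> {}"
    using assms unfolding holo_chain_def by blast
  have links: "range (rev fs ! i) \<inter> range (rev fs ! Suc i) \<noteq> {}"
    if i: "Suc i < length (rev fs)" for i
  proof -
    define j where "j = length fs - Suc (Suc i)"
    have "rev fs ! i = fs ! Suc j" "rev fs ! Suc i = fs ! j"
      using i by (simp_all add: rev_nth j_def Suc_diff_Suc)
    moreover have "Suc j < length fs" using i j_def by simp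
    ultimately show ?thesis using fs(5) by (auto simp: Int_commute)
  qed
  show ?thesis
    unfolding holo_chain_def using fs links
    by (intro exI[of _ "rev fs"]) (auto simp: hd_rev last_rev)
qed

lemma topspace_mat_top [simp]: "topspace (mat_top n) = carrier_mat n n"
  unfolding mat_top_def by (simp add: topspace_pullback_topology)

lemma continuous_map_holo_mat_map:
  assumes "holo_mat_map n f"
  shows "continuous_map euclidean (mat_top n) f"
  unfolding mat_top_def
proof (rule continuous_map_pullback')
  show "topspace euclidean \<subseteq> f -` carrier_mat n n"
    using assms by (auto simp: holo_mat_map_def)
  have "continuous_on UNIV (\<lambda>z. entry_fun n (f z) (i, j))" for i j
    using assms by (cases "i < n \<and> j < n")
      (auto simp: entry_fun_def holo_mat_map_def holomorphic_on_imp_continuous_on)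
  then show "continuous_map euclidean euclidean (entry_fun n \<circ> f)"
    unfolding continuous_map_iff_continuous2
    by (intro continuous_on_coordinatewise_then_product) (auto simp: o_def)
qed

lemma connected_component_of_holo_curve:
  assumes f: "holo_mat_map n f" "range f \<subseteq> S"
  shows "connected_component_of (subtopology (mat_top n) S) (f s) (f t)"
proof -
  have "continuous_map euclidean (subtopology (mat_top n) S) f"
    using continuous_map_holo_mat_map[OF f(1)] f(2) by (auto intro: continuous_map_into_subtopology)
  then have "connectedin (subtopology (mat_top n) S) (range f)"
    by (rule connectedin_continuous_map_image) (simp add: connected_UNIV)
  then show ?thesis unfolding connected_component_of_def by blast
qed

lemma holo_chain_imp_connected_component_of:
  assumes "holo_chain n S a b"
  shows "connected_component_of (subtopology (mat_top n) S) a b"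
proof -
  let ?X = "subtopology (mat_top n) S"
  obtain fs where fs: "fs \<noteq> []" "\<forall>f\<in>set fs. holo_mat_map n f \<and> range f \<subseteq> S"
    "a \<in> range (hd fs)" "b \<in> range (last fs)"
    "\<forall>i. Suc i < length fs \<longrightarrow> range (fs ! i) \<inter> range (fs ! Suc i) \<noteq> {}"
    using assms unfolding holo_chain_def by blast
  have "\<forall>x\<in>range (hd fs). \<forall>y\<in>range (last fs). connected_component_of ?X x y"
    using fs(1,2,5)
  proof (induction fs)
    case Nil
    then show ?case by simp
  next
    case (Cons f fs)
    then have f: "holo_mat_map n f" "range f \<subseteq> S" by simp_all
    show ?case
    proof (cases "fs = []")
      case True
      then show ?thesis using connected_component_of_holo_curve[OF f] by auto
    next
      case False
      have "range f \<inter> range (hd fs) \<noteq> {}"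
        using Cons.prems(3)[rule_format, of 0] False by (simp add: hd_conv_nth)
      then obtain c where c: "c \<in> range f" "c \<in> range (hd fs)" by blast
      have "\<forall>x\<in>range (hd fs). \<forall>y\<in>range (last fs). connected_component_of ?X x y"
      proof (rule Cons.IH[OF False])
        show "\<forall>g\<in>set fs. holo_mat_map n g \<and> range g \<subseteq> S" using Cons.prems(2) by simp
        show "\<forall>i. Suc i < length fs \<longrightarrow> range (fs ! i) \<inter> range (fs ! Suc i) \<noteq> {}"
          using Cons.prems(3) by (metis Suc_less_eq length_Cons nth_Cons_Suc)
      qed
      then have "connected_component_of ?X c y" if "y \<in> range (last fs)" for y
        using c(2) that by blast
      moreover have "connected_component_of ?X x c" if "x \<in> range f" for x
        using c(1) that connected_component_of_holo_curve[OF f] by auto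
      ultimately show ?thesis
        using False by (auto intro: connected_component_of_trans[of _ _ c])
    qed
  qed
  then show ?thesis using fs(3,4) by blast
qed

lemma connected_components_of_C_connected:
  assumes "C_connected n S" and "S \<subseteq> carrier_mat n n"
  shows "connected_components_of (subtopology (mat_top n) S) \<subseteq> {S}"
proof -
  have "connected_space (subtopology (mat_top n) S)"
    using assms holo_chain_imp_connected_component_of
    unfolding connected_space_iff_connected_component C_connected_iff_holo_chain by auto
  then show ?thesis
    using assms(2) by (simp add: connected_components_of_subset_sing Int_absorb1)
qed

section \<open>Similarity classes\<close>

definition similarity_class :: "nat \<Rightarrow> complex mat \<Rightarrow> complex mat set" where
  "similarity_class n B = {C \<in> carrier_mat n n. similar_mat C B}"

lemma similarity_class_eq:
  assumes "A \<in> similarity_class n B"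
  shows "similarity_class n A = similarity_class n B"
  using assms similar_mat_trans similar_mat_sym unfolding similarity_class_def by blast

lemma holo_conjugates_in_similarity_class:
  assumes B: "B \<in> carrier_mat n n" and F: "holo_mat_map n F" and G: "holo_mat_map n G"
    and FG: "\<And>z. F z * G z = 1\<^sub>m n"
  shows "F z * B * G z \<in> similarity_class n B"
proof -
  have cF: "F z \<in> carrier_mat n n" and cG: "G z \<in> carrier_mat n n"
    using F G by (auto simp: holo_mat_map_def)
  then have "F z * B * G z \<in> carrier_mat n n" using B by (metis mult_carrier_mat)
  moreover have "similar_mat (F z * B * G z) B"
    using cF cG B FG mat_mult_left_right_inverse[OF cF cG FG]
    by (intro similar_matI[of _ _ "F z" "G z" n]) simp_all
  ultimately show ?thesis by (simp add: similarity_class_def)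
qed

text \<open>If \<open>C = P B P\<^sup>-\<^sup>1\<close> and \<open>F\<close> is an entire path of invertible matrices from \<open>1\<close> to \<open>P\<close>,
  the conjugates \<open>F z B F(z)\<^sup>-\<^sup>1\<close> form an entire curve from \<open>B\<close> to \<open>C\<close>.\<close>
lemma similarity_class_holo_curve:
  assumes B: "B \<in> carrier_mat n n" and C: "C \<in> similarity_class n B"
  obtains f where "holo_mat_map n f" "range f \<subseteq> similarity_class n B" "f 0 = B" "f 1 = C"
proof -
  obtain P Q where P: "P \<in> carrier_mat n n" and Q: "Q \<in> carrier_mat n n"
    and PQ: "P * Q = 1\<^sub>m n" and QP: "Q * P = 1\<^sub>m n" and C_eq: "C = P * B * Q"
  proof -
    from C have "similar_mat C B" by (simp add: similarity_class_def)
    from similar_matD[OF this] obtain m P Q where "{C, B, P, Q} \<subseteq> carrier_mat m m"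
      "P * Q = 1\<^sub>m m" "Q * P = 1\<^sub>m m" "C = P * B * Q" by blast
    moreover have "m = n" using calculation(1) B by auto
    ultimately show ?thesis using that by auto
  qed
  have "det P \<noteq> 0"
    using det_mult[OF P Q] PQ by (metis det_one mult_zero_left zero_neq_one)
  then obtain F where F: "holo_mat_map n F" and detF: "\<And>z. det (F z) \<noteq> 0"
    and F0: "F 0 = 1\<^sub>m n" and F1: "F 1 = P"
    using invertible_mat_holo_path[OF P] by blast
  obtain G where G: "holo_mat_map n G" and FG: "\<And>z. F z * G z = 1\<^sub>m n"
    using holo_mat_map_right_inverse[OF F detF] by blast
  have cG: "G z \<in> carrier_mat n n" for z
    using G by (simp add: holo_mat_map_def)
  have G0: "G 0 = 1\<^sub>m n"
    using FG[of 0] cG[of 0] by (simp add: F0)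
  have "G 1 = Q * P * G 1" using QP left_mult_one_mat[OF cG] by simp
  also have "\<dots> = Q * (P * G 1)" using Q P cG by (rule assoc_mult_mat)
  also have "\<dots> = Q" using FG[of 1] F1 Q by simp
  finally have G1: "G 1 = Q" .
  show ?thesis
  proof
    show "holo_mat_map n (\<lambda>z. F z * B * G z)"
      by (intro holo_mat_map_mult holo_mat_map_const F G B)
    show "range (\<lambda>z. F z * B * G z) \<subseteq> similarity_class n B"
      using holo_conjugates_in_similarity_class[OF B F G FG] by auto
    show "F 0 * B * G 0 = B" using B by (simp add: F0 G0)
    show "F 1 * B * G 1 = C" by (simp add: F1 G1 C_eq)
  qed
qed

lemma C_connected_similarity_class:
  assumes "B \<in> carrier_mat n n"
  shows "C_connected n (similarity_class n B)"
  unfolding C_connected_iff_holo_chain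
proof (intro ballI)
  fix C D
  assume C: "C \<in> similarity_class n B" and D: "D \<in> similarity_class n B"
  have C_car: "C \<in> carrier_mat n n" and D_C: "D \<in> similarity_class n C"
    using C D similarity_class_eq[OF C] by (auto simp: similarity_class_def)
  obtain f where "holo_mat_map n f" "range f \<subseteq> similarity_class n C" "f 0 = C" "f 1 = D"
    by (rule similarity_class_holo_curve[OF C_car D_C])
  then show "holo_chain n (similarity_class n B) C D"
    using holo_chain_curve[of n f _ 0 1] similarity_class_eq[OF C] by simp
qed

section \<open>Cyclic matrices\<close>

lemma similar_mat_four_block_swap:
  fixes A B :: "'a :: comm_ring_1 mat"
  assumes A: "A \<in> carrier_mat k k" and B: "B \<in> carrier_mat m m"
  shows "similar_mat (four_block_mat A (0\<^sub>m k m) (0\<^sub>m m k) B)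
    (four_block_mat B (0\<^sub>m m k) (0\<^sub>m k m) A)"
proof -
  let ?P = "four_block_mat (0\<^sub>m k m) (1\<^sub>m k) (1\<^sub>m m) (0\<^sub>m m k) :: 'a mat"
  let ?Q = "four_block_mat (0\<^sub>m m k) (1\<^sub>m m) (1\<^sub>m k) (0\<^sub>m k m) :: 'a mat"
  have Z: "0\<^sub>m k m \<in> carrier_mat k m" "0\<^sub>m m k \<in> carrier_mat m k"
    and I: "1\<^sub>m k \<in> carrier_mat k k" "1\<^sub>m m \<in> carrier_mat m m" by auto
  have "?P * four_block_mat B (0\<^sub>m m k) (0\<^sub>m k m) A = four_block_mat (0\<^sub>m k m) A B (0\<^sub>m m k)"
    unfolding mult_four_block_mat[OF Z(1) I(1) I(2) Z(2) B Z(2) Z(1) A]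
    using A B by (intro cong_four_block_mat) simp_all
  moreover have "four_block_mat (0\<^sub>m k m) A B (0\<^sub>m m k) * ?Q
      = four_block_mat A (0\<^sub>m k m) (0\<^sub>m m k) B"
    unfolding mult_four_block_mat[OF Z(1) A B Z(2) Z(2) I(2) I(1) Z(1)]
    using A B by (intro cong_four_block_mat) simp_all
  moreover have "?P * ?Q = 1\<^sub>m (k + m)"
    unfolding mult_four_block_mat[OF Z(1) I(1) I(2) Z(2) Z(2) I(2) I(1) Z(1)]
      four_block_one_mat[symmetric]
    by (intro cong_four_block_mat) simp_all
  moreover have "?Q * ?P = 1\<^sub>m (m + k)"
    unfolding mult_four_block_mat[OF Z(2) I(2) I(1) Z(1) Z(1) I(1) I(2) Z(2)]
      four_block_one_mat[symmetric]
    by (intro cong_four_block_mat) simp_all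
  moreover have "?P \<in> carrier_mat (k + m) (k + m)" "?Q \<in> carrier_mat (k + m) (k + m)"
    using four_block_carrier_mat[OF Z(1) Z(2)] four_block_carrier_mat[OF Z(2) Z(1)]
    by (simp_all add: add.commute)
  ultimately show ?thesis
    using four_block_carrier_mat[OF A B] four_block_carrier_mat[OF B A]
    by (intro similar_matI[of _ _ ?P ?Q "k + m"]) (simp_all add: add.commute)
qed

lemma four_block_mat_diag_assoc:
  fixes A B C :: "'a :: zero mat"
  assumes A: "A \<in> carrier_mat a a" and B: "B \<in> carrier_mat b b" and C: "C \<in> carrier_mat c c"
  shows "four_block_mat A (0\<^sub>m a (b + c)) (0\<^sub>m (b + c) a) (four_block_mat B (0\<^sub>m b c) (0\<^sub>m c b) C)
    = four_block_mat (four_block_mat A (0\<^sub>m a b) (0\<^sub>m b a) B) (0\<^sub>m (a + b) c) (0\<^sub>m c (a + b)) C"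
  by (rule eq_matI) (use A B C in auto)

lemma similar_mat_jordan_matrix_Cons:
  fixes L1 L2 :: "(nat \<times> 'a :: comm_ring_1) list"
  assumes sim: "similar_mat (jordan_matrix L1) (jordan_matrix L2)"
    and size: "sum_list (map fst L1) = sum_list (map fst L2)"
  shows "similar_mat (jordan_matrix (x # L1)) (jordan_matrix (x # L2))"
proof -
  obtain k a where x: "x = (k, a)" by force
  show ?thesis
    unfolding x jordan_matrix_Cons size
    by (rule similar_mat_four_block_0_0[OF similar_mat_refl[OF jordan_block_carrier] sim
      jordan_block_carrier]) (metis jordan_matrix_carrier size)
qed

lemma similar_mat_jordan_matrix_swap:
  fixes R :: "(nat \<times> 'a :: comm_ring_1) list"
  shows "similar_mat (jordan_matrix (x # y # R)) (jordan_matrix (y # x # R))"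
proof -
  obtain k a where x: "x = (k, a)" by force
  obtain l b where y: "y = (l, b)" by force
  let ?s = "sum_list (map fst R)"
  note assoc = four_block_mat_diag_assoc[OF jordan_block_carrier jordan_block_carrier
    jordan_matrix_carrier]
  have "jordan_matrix (x # y # R) = four_block_mat
      (four_block_mat (jordan_block k a) (0\<^sub>m k l) (0\<^sub>m l k) (jordan_block l b))
      (0\<^sub>m (k + l) ?s) (0\<^sub>m ?s (k + l)) (jordan_matrix R)"
    unfolding x y jordan_matrix_Cons by (simp add: assoc)
  moreover have "jordan_matrix (y # x # R) = four_block_mat
      (four_block_mat (jordan_block l b) (0\<^sub>m l k) (0\<^sub>m k l) (jordan_block k a))
      (0\<^sub>m (k + l) ?s) (0\<^sub>m ?s (k + l)) (jordan_matrix R)"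
    unfolding x y jordan_matrix_Cons by (simp add: assoc add.commute)
  ultimately show ?thesis
    by (simp only:) (rule similar_mat_four_block_0_0[OF similar_mat_four_block_swap
      similar_mat_refl[OF jordan_matrix_carrier]], auto)
qed

lemma similar_mat_jordan_matrix_move:
  fixes ys zs :: "(nat \<times> 'a :: comm_ring_1) list"
  shows "similar_mat (jordan_matrix (x # ys @ zs)) (jordan_matrix (ys @ x # zs))"
proof (induction ys)
  case Nil
  then show ?case by (auto intro: similar_mat_refl[OF jordan_matrix_carrier])
next
  case (Cons y ys)
  have "similar_mat (jordan_matrix (x # y # ys @ zs)) (jordan_matrix (y # x # ys @ zs))"
    by (rule similar_mat_jordan_matrix_swap)
  moreover have "similar_mat (jordan_matrix (y # x # ys @ zs)) (jordan_matrix (y # ys @ x # zs))"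
    by (rule similar_mat_jordan_matrix_Cons[OF Cons.IH]) simp
  ultimately show ?case by (auto intro: similar_mat_trans)
qed

lemma similar_mat_jordan_matrix_mset:
  fixes L1 L2 :: "(nat \<times> 'a :: comm_ring_1) list"
  assumes "mset L1 = mset L2"
  shows "similar_mat (jordan_matrix L1) (jordan_matrix L2)"
  using assms
proof (induction L1 arbitrary: L2)
  case Nil
  then show ?case by (auto intro: similar_mat_refl[OF jordan_matrix_carrier])
next
  case (Cons x L1)
  have "x \<in> set L2" using Cons.prems by (metis list.set_intros(1) set_mset_mset)
  then obtain ys zs where L2: "L2 = ys @ x # zs" by (meson split_list)
  have m: "mset L1 = mset (ys @ zs)" using Cons.prems L2 by simp
  then have "sum_list (map fst L1) = sum_list (map fst (ys @ zs))"
    by (metis mset_map sum_mset_sum_list)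
  then have "similar_mat (jordan_matrix (x # L1)) (jordan_matrix (x # ys @ zs))"
    by (rule similar_mat_jordan_matrix_Cons[OF Cons.IH[OF m]])
  moreover have "similar_mat (jordan_matrix (x # ys @ zs)) (jordan_matrix L2)"
    unfolding L2 by (rule similar_mat_jordan_matrix_move)
  ultimately show ?case by (rule similar_mat_trans)
qed

lemma filter_snd_eq_if_distinct:
  assumes "distinct (map snd xs)" and "(k, a) \<in> set xs"
  shows "filter (\<lambda>x. snd x = a) xs = [(k, a)]"
  using assms
proof (induction xs)
  case (Cons y xs)
  show ?case
  proof (cases "y = (k, a)")
    case True
    with Cons.prems(1) have "\<forall>x\<in>set xs. snd x \<noteq> a" by force
    with True show ?thesis by (simp add: filter_empty_conv)
  next
    case False
    with Cons.prems(2) have kxs: "(k, a) \<in> set xs" by simp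
    then have "a \<in> snd ` set xs" by force
    with Cons.prems(1) have "snd y \<noteq> a" by auto
    with Cons.IH kxs Cons.prems(1) show ?thesis by simp
  qed
qed simp

lemma jordan_nf_distinct_eigenvalues_blocks:
  assumes jnf: "jordan_nf A n_as" and dist: "distinct (map snd n_as)"
  shows "set n_as = {(order a (char_poly A), a) | a. order a (char_poly A) \<noteq> 0}"
proof -
  have order: "order a (char_poly A) = k" if "(k, a) \<in> set n_as" for k a
    using jordan_nf_order[OF jnf, of a] filter_snd_eq_if_distinct[OF dist that] by simp
  have "\<exists>k. (k, a) \<in> set n_as" if "order a (char_poly A) \<noteq> 0" for a
  proof -
    have "filter (\<lambda>x. snd x = a) n_as \<noteq> []"
    proof
      assume "filter (\<lambda>x. snd x = a) n_as = []"
      with jordan_nf_order[OF jnf, of a] that show False by simp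
    qed
    then show ?thesis by (auto simp: filter_empty_conv)
  qed
  moreover have "k \<noteq> 0" if "(k, a) \<in> set n_as" for k a
    using jnf that unfolding jordan_nf_def by force
  ultimately show ?thesis using order by fastforce
qed

lemma similar_mat_if_cyclic_char_poly_eq:
  assumes A: "cyclic_mat A" and B: "cyclic_mat B" and cp: "char_poly A = char_poly B"
  shows "similar_mat A B"
proof -
  obtain n_as m_as where jA: "jordan_nf A n_as" "distinct (map snd n_as)"
    and jB: "jordan_nf B m_as" "distinct (map snd m_as)"
    using A B unfolding cyclic_mat_def by blast
  have "set n_as = set m_as"
    using jordan_nf_distinct_eigenvalues_blocks[OF jA] jordan_nf_distinct_eigenvalues_blocks[OF jB] cp
    by simp
  moreover have "distinct n_as" "distinct m_as" using jA(2) jB(2) distinct_map by auto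
  ultimately have "similar_mat (jordan_matrix n_as) (jordan_matrix m_as)"
    by (intro similar_mat_jordan_matrix_mset) (simp add: set_eq_iff_mset_eq_distinct)
  moreover have "similar_mat A (jordan_matrix n_as)" "similar_mat B (jordan_matrix m_as)"
    using jA(1) jB(1) unfolding jordan_nf_def by auto
  ultimately show ?thesis by (meson similar_mat_sym similar_mat_trans)
qed

section \<open>Fibres and strata\<close>

lemma fibre_carrier: "A \<in> fibre n x \<Longrightarrow> A \<in> carrier_mat n n"
  unfolding fibre_def spectral_ball_def by auto

lemma char_poly_eq_if_in_fibre:
  assumes A: "A \<in> fibre n x" and B: "B \<in> fibre n x"
  shows "char_poly A = char_poly B"
proof (rule poly_eqI)
  fix j
  have A_mon: "degree (char_poly A) = n" "coeff (char_poly A) n = 1"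
    and B_mon: "degree (char_poly B) = n" "coeff (char_poly B) n = 1"
    using degree_monic_char_poly fibre_carrier[OF A] fibre_carrier[OF B] by blast+
  have sym: "sym_map n A = sym_map n B" using A B unfolding fibre_def by auto
  consider "j < n" | "j = n" | "j > n" by linarith
  then show "coeff (char_poly A) j = coeff (char_poly B) j"
  proof cases
    case 1
    define k where "k = n - Suc j"
    have k: "k < n" "n - Suc k = j" using 1 unfolding k_def by auto
    have "sym_map n M ! k = (-1) ^ Suc k * coeff (char_poly M) j" for M
      unfolding sym_map_def using k by (simp del: upt_Suc)
    then have "(-1) ^ Suc k * coeff (char_poly A) j = (-1) ^ Suc k * coeff (char_poly B) j"
      using sym by metis
    then show ?thesis by simp
  next
    case 2
    then show ?thesis using A_mon B_mon by simp
  next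
    case 3
    then show ?thesis using A_mon B_mon by (simp add: coeff_eq_0)
  qed
qed

lemma fibre_if_char_poly_eq:
  assumes A: "A \<in> fibre n x" and B: "B \<in> carrier_mat n n" and cp: "char_poly B = char_poly A"
  shows "B \<in> fibre n x"
proof -
  have "spectrum B = spectrum A"
    using spectrum_root_char_poly[OF fibre_carrier[OF A]] spectrum_root_char_poly[OF B] cp by simp
  then have "spectral_radius B = spectral_radius A" unfolding spectral_radius_def by simp
  moreover have "sym_map n B = sym_map n A" unfolding sym_map_def cp ..
  ultimately show ?thesis using A B unfolding fibre_def spectral_ball_def by auto
qed

lemma similarity_class_subset_fibre:
  assumes "A \<in> fibre n x"
  shows "similarity_class n A \<subseteq> fibre n x"
  using assms char_poly_similar fibre_if_char_poly_eq unfolding similarity_class_def by blast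

lemma fibre_holo_chain_diag:
  assumes A: "A \<in> fibre n x" and es: "char_poly A = (\<Prod>e \<leftarrow> es. [:- e, 1:])"
  shows "holo_chain n (fibre n x) A (mat n n (\<lambda>(i, j). if i = j then es ! i else 0))"
proof -
  have A_car: "A \<in> carrier_mat n n" by (rule fibre_carrier[OF A])
  obtain T U V where sd: "schur_decomposition A es = (T, U, V)"
    by (cases "schur_decomposition A es") auto
  from schur_decomposition[OF A_car es sd] have wit: "similar_mat_wit A T U V"
    and ut: "upper_triangular T" and dT: "diag_mat T = es" by auto
  have T: "T \<in> carrier_mat n n" using similar_mat_witD2[OF A_car wit] by auto
  have "T \<in> similarity_class n A"
    using wit T similar_mat_sym unfolding similarity_class_def similar_mat_def by blast
  then obtain f where f: "holo_mat_map n f" "range f \<subseteq> similarity_class n A" "f 0 = A" "f 1 = T"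
    by (rule similarity_class_holo_curve[OF A_car])
  have "holo_chain n (fibre n x) A T"
    using holo_chain_curve[of n f "fibre n x" 0 1] f similarity_class_subset_fibre[OF A] by auto
  moreover have "holo_chain n (fibre n x) T (mat n n (\<lambda>(i, j). if i = j then es ! i else 0))"
  proof -
    define L where "L z = mat n n (\<lambda>(i, j). if i = j then T $$ (i, j) else (1 - z) * T $$ (i, j))"
      for z
    have L: "L z \<in> carrier_mat n n" for z by (simp add: L_def)
    have "(\<lambda>z. L z $$ (i, j)) holomorphic_on UNIV" if "i < n" "j < n" for i j
      using that by (cases "i = j") (auto simp: L_def intro!: holomorphic_intros)
    then have "holo_mat_map n L" using L by (simp add: holo_mat_map_def)
    moreover have "range L \<subseteq> fibre n x"
    proof -
      have "upper_triangular (L z)" "diag_mat (L z) = es" for z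
        using ut T dT by (auto simp: upper_triangular_def diag_mat_def L_def)
      then have "char_poly (L z) = char_poly A" for z
        using char_poly_upper_triangular[OF L] es by simp
      then show ?thesis using fibre_if_char_poly_eq[OF A L] by auto
    qed
    moreover have "L 0 = T" by (rule eq_matI) (use T in \<open>auto simp: L_def\<close>)
    moreover have "L 1 = mat n n (\<lambda>(i, j). if i = j then es ! i else 0)"
      by (rule eq_matI) (use T dT in \<open>auto simp: L_def diag_mat_def\<close>)
    ultimately show ?thesis using holo_chain_curve[of n L "fibre n x" 0 1] by simp
  qed
  ultimately show ?thesis by (rule holo_chain_trans)
qed

lemma C_connected_fibre: "C_connected n (fibre n x)"
  unfolding C_connected_iff_holo_chain
proof (intro ballI)
  fix A B
  assume A: "A \<in> fibre n x" and B: "B \<in> fibre n x"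
  obtain es where es: "char_poly A = (\<Prod>e \<leftarrow> es. [:- e, 1:])"
    using char_poly_factorized[OF fibre_carrier[OF A]] by blast
  then have "char_poly B = (\<Prod>e \<leftarrow> es. [:- e, 1:])"
    using char_poly_eq_if_in_fibre[OF A B] by simp
  then show "holo_chain n (fibre n x) A B"
    using fibre_holo_chain_diag[OF A es] fibre_holo_chain_diag[OF B]
    by (blast intro: holo_chain_trans holo_chain_sym)
qed

lemma similarity_class_subset_largest_stratum:
  assumes "A \<in> largest_stratum n x"
  shows "similarity_class n A \<subseteq> largest_stratum n x"
proof
  fix C
  assume C: "C \<in> similarity_class n A"
  then have "similar_mat C A" by (simp add: similarity_class_def)
  moreover obtain n_as where "jordan_nf A n_as" "distinct (map snd n_as)"
    using assms by (auto simp: largest_stratum_def cyclic_mat_def)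
  ultimately have "cyclic_mat C"
    using similar_mat_trans unfolding cyclic_mat_def jordan_nf_def by blast
  moreover have "C \<in> fibre n x"
    using C assms similarity_class_subset_fibre unfolding largest_stratum_def by blast
  ultimately show "C \<in> largest_stratum n x" by (simp add: largest_stratum_def)
qed

lemma C_connected_largest_stratum: "C_connected n (largest_stratum n x)"
  unfolding C_connected_iff_holo_chain
proof (intro ballI)
  fix A B
  assume A: "A \<in> largest_stratum n x" and B: "B \<in> largest_stratum n x"
  then have A_car: "A \<in> carrier_mat n n" and "B \<in> carrier_mat n n"
    by (auto simp: largest_stratum_def fibre_carrier)
  moreover have "similar_mat B A"
    using A B char_poly_eq_if_in_fibre
    by (intro similar_mat_if_cyclic_char_poly_eq) (auto simp: largest_stratum_def)
  ultimately have "B \<in> similarity_class n A" by (simp add: similarity_class_def)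
  then obtain f where "holo_mat_map n f" "range f \<subseteq> similarity_class n A" "f 0 = A" "f 1 = B"
    by (rule similarity_class_holo_curve[OF A_car])
  then show "holo_chain n (largest_stratum n x) A B"
    using holo_chain_curve[of n f _ 0 1] similarity_class_subset_largest_stratum[OF A] by auto
qed

theorem lemma1:
  fixes n :: nat
  assumes "n \<ge> 2"
  shows "\<forall>x \<in> symmetrized_polydisc n.
           C_connected n (fibre n x) \<and>
           C_connected n (largest_stratum n x) \<and>
           (\<forall>S \<in> strata n x. \<forall>C \<in> connected_components_of (subtopology (mat_top n) S).
              C_connected n C)"
proof (intro ballI conjI)
  fix x
  show "C_connected n (fibre n x)" by (rule C_connected_fibre)
  show "C_connected n (largest_stratum n x)" by (rule C_connected_largest_stratum)
  fix S C
  assume S: "S \<in> strata n x" and C: "C \<in> connected_components_of (subtopology (mat_top n) S)"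
  obtain A where A: "A \<in> fibre n x" and S_eq: "S = similarity_class n A"
    using S unfolding strata_def similarity_class_def by blast
  have "C_connected n S"
    unfolding S_eq by (rule C_connected_similarity_class[OF fibre_carrier[OF A]])
  moreover have "S \<subseteq> carrier_mat n n" by (auto simp: S_eq similarity_class_def)
  ultimately show "C_connected n C"
    using connected_components_of_C_connected C by blast
qed

end
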